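(* Let $w\in\mathfrak{S}_n$ be right-almost-reducible at $i$. Then (1) $\max\{w(1),\ldots,w(i-1)\}=i+1$; (2) $w(i)>i+1$; and (3) the elements of $\{1,\ldots,i+1\}\setminus\{w(1),\ldots,w(i-1)\}$ appear out of order in the one-line notation of $w$ (i.e. if this set is $\{a<b\}$ then $w^{-1}(b)<w^{-1}(a)$).
   Context: $\mathfrak{S}_n$ has simple generators $S=\{s_1,\ldots,s_{n-1}\}$, $s_i=(i\ i{+}1)$, products are compositions $(uv)(m)=u(v(m))$, and $w$ is written in one-line notation $w(1)\cdots w(n)$; $\ell$ is length. $\supp(x)$ is the set of simple generators in a reduced word of $x$; $D_L(x)=\{s:\ell(sx)<\ell(x)\}$, $D_R(x)=\{s:\ell(xs)<\ell(x)\}$. For $J\subseteq S$, $x=x^Jx_J$ is the parabolic decomposition ($x_J\in W_J=\langle J\rangle$, $x^J$ minimal length in $xW_J$); it is a BP-decomposition if $\supp(x^J)\cap J\subseteq D_L(x_J)$. $w$ is Bruhat irreducible if $\supp(w)=S$ and $w$ is not a product $w'w''$ with $w',w''\ne e$ and disjoint supports. A Bruhat irreducible $w$ is almost reducible at $(J,i)$ if $w=w^Jw_J$ is a BP-decomposition with $\supp(w^J)\cap J=\{s_i\}$ and $s_i\notin D_L(w)\cup D_R(w)$. $w$ is right-almost-reducible at $i$ if it is Bruhat irreducible and almost reducible at $(\{s_i,\ldots,s_{n-1}\},i)$. *)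

theory Defs
  imports "HOL-Combinatorics.Permutations" "HOL-Combinatorics.Transposition"
begin

text \<open>Symmetric group S_n: permutations of {1..n} (identity outside), composition
  (u o v)(m) = u (v m). Simple generators s_i = (i i+1), indexed by i in {1..<n}.\<close>

definition perm_Sn :: "nat \<Rightarrow> (nat \<Rightarrow> nat) \<Rightarrow> bool" where
  "perm_Sn n x \<longleftrightarrow> x permutes {1..n}"

definition Sgens :: "nat \<Rightarrow> nat set" where
  "Sgens n = {1..<n}"

definition sgen :: "nat \<Rightarrow> nat \<Rightarrow> nat" where
  "sgen i = transpose i (Suc i)"

definition word_eval :: "nat list \<Rightarrow> nat \<Rightarrow> nat" where
  "word_eval ws = foldr (\<lambda>i f. sgen i \<circ> f) ws id"

definition is_word :: "nat \<Rightarrow> nat list \<Rightarrow> (nat \<Rightarrow> nat) \<Rightarrow> bool" where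
  "is_word n ws x \<longleftrightarrow> set ws \<subseteq> Sgens n \<and> word_eval ws = x"

definition len :: "nat \<Rightarrow> (nat \<Rightarrow> nat) \<Rightarrow> nat" where
  "len n x = (LEAST k. \<exists>ws. is_word n ws x \<and> length ws = k)"

definition reduced_word :: "nat \<Rightarrow> nat list \<Rightarrow> (nat \<Rightarrow> nat) \<Rightarrow> bool" where
  "reduced_word n ws x \<longleftrightarrow> is_word n ws x \<and> length ws = len n x"

text \<open>Support: generators occurring in a reduced word (independent of the reduced word).\<close>
definition supp :: "nat \<Rightarrow> (nat \<Rightarrow> nat) \<Rightarrow> nat set" where
  "supp n x = {i. \<exists>ws. reduced_word n ws x \<and> i \<in> set ws}"

definition DL :: "nat \<Rightarrow> (nat \<Rightarrow> nat) \<Rightarrow> nat set" where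
  "DL n x = {i \<in> Sgens n. len n (sgen i \<circ> x) < len n x}"

definition DR :: "nat \<Rightarrow> (nat \<Rightarrow> nat) \<Rightarrow> nat set" where
  "DR n x = {i \<in> Sgens n. len n (x \<circ> sgen i) < len n x}"

definition parabolic :: "nat set \<Rightarrow> (nat \<Rightarrow> nat) set" where
  "parabolic J = {x. \<exists>ws. set ws \<subseteq> J \<and> word_eval ws = x}"

definition min_coset_rep :: "nat \<Rightarrow> nat set \<Rightarrow> (nat \<Rightarrow> nat) \<Rightarrow> (nat \<Rightarrow> nat) \<Rightarrow> bool" where
  "min_coset_rep n J x u \<longleftrightarrow>
     u \<in> (\<lambda>v. x \<circ> v) ` parabolic J \<and> (\<forall>v \<in> parabolic J. len n u \<le> len n (x \<circ> v))"

text \<open>x = x^J x_J with x^J = u, x_J = u^{-1} x is a BP-decomposition.\<close>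
definition BP_decomp :: "nat \<Rightarrow> nat set \<Rightarrow> (nat \<Rightarrow> nat) \<Rightarrow> (nat \<Rightarrow> nat) \<Rightarrow> bool" where
  "BP_decomp n J x u \<longleftrightarrow> min_coset_rep n J x u \<and> supp n u \<inter> J \<subseteq> DL n (inv u \<circ> x)"

definition bruhat_irreducible :: "nat \<Rightarrow> (nat \<Rightarrow> nat) \<Rightarrow> bool" where
  "bruhat_irreducible n w \<longleftrightarrow> perm_Sn n w \<and> supp n w = Sgens n \<and>
     \<not> (\<exists>u v. perm_Sn n u \<and> perm_Sn n v \<and> w = u \<circ> v \<and> u \<noteq> id \<and> v \<noteq> id
              \<and> supp n u \<inter> supp n v = {})"

definition almost_reducible :: "nat \<Rightarrow> (nat \<Rightarrow> nat) \<Rightarrow> nat set \<Rightarrow> nat \<Rightarrow> bool" where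
  "almost_reducible n w J i \<longleftrightarrow> bruhat_irreducible n w \<and> J \<subseteq> Sgens n \<and>
     (\<exists>u. BP_decomp n J w u \<and> supp n u \<inter> J = {i}) \<and> i \<notin> DL n w \<union> DR n w"

definition right_almost_reducible :: "nat \<Rightarrow> (nat \<Rightarrow> nat) \<Rightarrow> nat \<Rightarrow> bool" where
  "right_almost_reducible n w i \<longleftrightarrow> almost_reducible n w {i..<n} i"

end

theory Submission
  imports Defs
begin

text \<open>The length of a permutation is its number of inversions, so \<open>s\<^sub>j\<close> is a right
  (left) descent of \<open>x\<close> iff \<open>x(j+1) < x(j)\<close> (resp. \<open>x\<^sup>-\<^sup>1(j+1) < x\<^sup>-\<^sup>1(j)\<close>), and \<open>s\<^sub>j\<close>
  lies in the support of \<open>x\<close> iff \<open>x\<close> does not stabilise \<open>{1..j}\<close>.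

  Let \<open>u = w\<^sup>J\<close> for \<open>J = {s\<^sub>i, ..., s\<^sub>n\<^sub>-\<^sub>1}\<close>. Then \<open>u\<close> agrees with \<open>w\<close> below position \<open>i\<close>,
  has no right descent in \<open>J\<close>, and stabilises \<open>{1..j}\<close> for \<open>j > i\<close> but not for \<open>j = i\<close>; hence
  \<open>u(i) < u(i+1) \<le> i\<close> and \<open>w{1..i-1} = {1..i+1} - {u(i), u(i+1)}\<close>, which gives (1). The
  BP condition \<open>s\<^sub>i \<in> D\<^sub>L(w\<^sub>J)\<close> says that these two missing values occur in reverse order
  in \<open>w\<close>, which is (3). Finally \<open>w(i) \<le> i+1\<close> would make \<open>w(i)\<close> a missing value:
  \<open>w(i) = u(i)\<close> contradicts (3), and \<open>w(i) = u(i+1)\<close> factors \<open>w = (u s\<^sub>i) ((u s\<^sub>i)\<^sup>-\<^sup>1 w)\<close>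
  into permutations supported on either side of \<open>s\<^sub>i\<close>, contradicting Bruhat irreducibility
  (the second factor is trivial only if \<open>s\<^sub>i \<in> D\<^sub>R(w)\<close>).\<close>

lemma word_eval_Nil [simp]: "word_eval [] = id"
  by (simp add: word_eval_def)

lemma word_eval_Cons [simp]: "word_eval (a # ws) = sgen a \<circ> word_eval ws"
  by (simp add: word_eval_def)

lemma word_eval_snoc: "word_eval (ws @ [a]) = word_eval ws \<circ> sgen a"
  by (induction ws) (simp_all add: o_assoc)

lemma sgen_sgen [simp]: "sgen j (sgen j x) = x"
  by (simp add: sgen_def)

lemma sgen_comp_sgen [simp]: "sgen j \<circ> sgen j = id"
  by (simp add: sgen_def)

lemma inv_sgen [simp]: "inv (sgen j) = sgen j"
  by (simp add: sgen_def)

lemma sgen_permutes: "j \<in> Sgens n \<Longrightarrow> sgen j permutes {1..n}"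
  unfolding sgen_def Sgens_def by (rule permutes_swap_id) auto

lemma word_eval_permutes: "set ws \<subseteq> Sgens n \<Longrightarrow> word_eval ws permutes {1..n}"
proof (induction ws)
  case (Cons a ws)
  then have "a \<in> Sgens n" "word_eval ws permutes {1..n}" by auto
  then show ?case
    unfolding word_eval_Cons by (rule permutes_compose[OF _ sgen_permutes, rotated])
qed (simp add: permutes_id)

lemma image_atLeastAtMost_sgen: "1 \<le> a \<Longrightarrow> a \<noteq> j \<Longrightarrow> sgen a ` {1..j} = {1..j}"
  unfolding sgen_def by (rule transpose_image_eq) auto

lemma permutes_apply_neq: "x permutes A \<Longrightarrow> p \<noteq> q \<Longrightarrow> x p \<noteq> x q"
  by (simp add: permutes_inj inj_eq)

section \<open>Length is the number of inversions\<close>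

definition inversions :: "nat \<Rightarrow> (nat \<Rightarrow> nat) \<Rightarrow> (nat \<times> nat) set" where
  "inversions n x = {(p, q). 1 \<le> p \<and> p < q \<and> q \<le> n \<and> x q < x p}"

definition inversion_number :: "nat \<Rightarrow> (nat \<Rightarrow> nat) \<Rightarrow> nat" where
  "inversion_number n x = card (inversions n x)"

lemma finite_inversions [simp]: "finite (inversions n x)"
  by (rule finite_subset[of _ "{1..n} \<times> {1..n}"]) (auto simp: inversions_def)

lemma inversion_number_id [simp]: "inversion_number n id = 0"
proof -
  have "inversions n id = {}" by (auto simp: inversions_def)
  then show ?thesis by (simp add: inversion_number_def)
qed

lemma mem_map_prod_image_involution:
  assumes "\<And>v. f (f v) = v"
  shows "(p, q) \<in> map_prod f f ` A \<longleftrightarrow> (f p, f q) \<in> A"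
proof
  assume "(p, q) \<in> map_prod f f ` A"
  then show "(f p, f q) \<in> A" using assms by auto
next
  assume "(f p, f q) \<in> A"
  then have "map_prod f f (f p, f q) \<in> map_prod f f ` A" by (rule imageI)
  then show "(p, q) \<in> map_prod f f ` A" using assms by simp
qed

lemma inversions_comp_sgen_ascent:
  assumes j: "1 \<le> j" "j < n" and asc: "x j < x (Suc j)"
  shows "inversions n (x \<circ> sgen j) = insert (j, Suc j) (map_prod (sgen j) (sgen j) ` inversions n x)"
proof -
  let ?s = "sgen j"
  have s_range: "1 \<le> ?s v \<and> ?s v \<le> n" if "1 \<le> v" "v \<le> n" for v
    using that j by (auto simp: sgen_def transpose_def)
  have s_mono: "?s p < ?s q" if "p < q" "(p, q) \<noteq> (j, Suc j)" for p q
    using that by (auto simp: sgen_def transpose_def)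
  have moved: "(p, q) \<in> inversions n (x \<circ> ?s) \<longleftrightarrow> (?s p, ?s q) \<in> inversions n x"
    if pq: "(p, q) \<noteq> (j, Suc j)" for p q
  proof
    assume inv: "(p, q) \<in> inversions n (x \<circ> ?s)"
    then have "?s p < ?s q" using s_mono pq by (auto simp: inversions_def)
    then show "(?s p, ?s q) \<in> inversions n x" using inv s_range by (auto simp: inversions_def)
  next
    assume inv: "(?s p, ?s q) \<in> inversions n x"
    then have "(?s p, ?s q) \<noteq> (j, Suc j)" using asc by (auto simp: inversions_def)
    then have "p < q" using s_mono[of "?s p" "?s q"] inv by (simp add: inversions_def)
    then show "(p, q) \<in> inversions n (x \<circ> ?s)"
      using inv s_range[of "?s p"] s_range[of "?s q"] by (auto simp: inversions_def)
  qed
  have new: "(j, Suc j) \<in> inversions n (x \<circ> ?s)"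
    using j asc by (simp add: inversions_def sgen_def)
  show ?thesis
  proof (rule set_eqI, clarify)
    fix p q
    show "(p, q) \<in> inversions n (x \<circ> ?s) \<longleftrightarrow>
      (p, q) \<in> insert (j, Suc j) (map_prod ?s ?s ` inversions n x)"
    proof (cases "(p, q) = (j, Suc j)")
      case False
      then show ?thesis
        unfolding insert_iff moved[OF False] mem_map_prod_image_involution[OF sgen_sgen]
        by (simp only: False simp_thms)
    qed (use new in simp)
  qed
qed

lemma inversion_number_comp_sgen_ascent:
  assumes j: "1 \<le> j" "j < n" and asc: "x j < x (Suc j)"
  shows "inversion_number n (x \<circ> sgen j) = Suc (inversion_number n x)"
proof -
  let ?\<sigma> = "map_prod (sgen j) (sgen j)"
  have "inj ?\<sigma>"
    by (rule prod.inj_map) (auto intro: inj_on_inverseI[where g = "sgen j"])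
  then have "card (?\<sigma> ` inversions n x) = card (inversions n x)"
    by (rule card_image[OF inj_on_subset, OF _ subset_UNIV])
  moreover have "(j, Suc j) \<notin> ?\<sigma> ` inversions n x"
    unfolding mem_map_prod_image_involution[OF sgen_sgen] by (simp add: inversions_def sgen_def)
  ultimately show ?thesis
    unfolding inversion_number_def inversions_comp_sgen_ascent[OF j asc] by simp
qed

lemma inversion_number_comp_sgen_descent:
  assumes j: "1 \<le> j" "j < n" and desc: "x (Suc j) < x j"
  shows "Suc (inversion_number n (x \<circ> sgen j)) = inversion_number n x"
proof -
  have "(x \<circ> sgen j) j < (x \<circ> sgen j) (Suc j)"
    using desc by (simp add: sgen_def)
  then have "inversion_number n (x \<circ> sgen j \<circ> sgen j) = Suc (inversion_number n (x \<circ> sgen j))"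
    by (rule inversion_number_comp_sgen_ascent[OF j])
  then show ?thesis
    unfolding comp_assoc sgen_comp_sgen comp_id by simp
qed

lemma inversion_number_comp_sgen_le:
  assumes x: "x permutes {1..n}" and j: "j \<in> Sgens n"
  shows "inversion_number n (x \<circ> sgen j) \<le> Suc (inversion_number n x)"
proof -
  have j': "1 \<le> j" "j < n" using j by (simp_all add: Sgens_def)
  consider "x j < x (Suc j)" | "x (Suc j) < x j"
    using permutes_apply_neq[OF x, of j "Suc j"] by linarith
  then show ?thesis
    by cases (auto dest: inversion_number_comp_sgen_ascent[OF j'] inversion_number_comp_sgen_descent[OF j'])
qed

lemma inversion_number_word_le: "set ws \<subseteq> Sgens n \<Longrightarrow> inversion_number n (word_eval ws) \<le> length ws"
proof (induction ws rule: rev_induct)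
  case (snoc a ws)
  then have "a \<in> Sgens n" "set ws \<subseteq> Sgens n" by auto
  then have "inversion_number n (word_eval ws \<circ> sgen a) \<le> Suc (inversion_number n (word_eval ws))"
    and "inversion_number n (word_eval ws) \<le> length ws"
    using inversion_number_comp_sgen_le[OF word_eval_permutes] snoc.IH by auto
  then show ?case
    unfolding word_eval_snoc length_append_singleton by linarith
qed simp

lemma inversion_number_le_inv:
  assumes x: "x permutes {1..n}"
  shows "inversion_number n x \<le> inversion_number n (inv x)"
proof -
  let ?f = "\<lambda>(p, q). (x q, x p)"
  have "inj_on ?f (inversions n x)"
  proof (rule inj_onI)
    fix a b assume "?f a = ?f b"
    then show "a = b"
      using permutes_inj[OF x] by (cases a, cases b) (simp add: inj_eq)
  qed
  moreover have "(x q, x p) \<in> inversions n (inv x)" if "(p, q) \<in> inversions n x" for p q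
  proof -
    have pq: "1 \<le> p" "p < q" "q \<le> n" "x q < x p"
      using that by (auto simp: inversions_def)
    then have "x q \<in> {1..n}" "x p \<in> {1..n}"
      using permutes_in_image[OF x, of p] permutes_in_image[OF x, of q] by auto
    then show ?thesis
      using pq by (simp add: inversions_def permutes_inverses(2)[OF x])
  qed
  then have "?f ` inversions n x \<subseteq> inversions n (inv x)" by auto
  ultimately show ?thesis
    unfolding inversion_number_def by (intro card_inj_on_le) auto
qed

lemma inversion_number_inv:
  assumes x: "x permutes {1..n}"
  shows "inversion_number n (inv x) = inversion_number n x"
  using inversion_number_le_inv[OF x] inversion_number_le_inv[OF permutes_inv[OF x]]
  by (simp add: permutes_inv_inv[OF x])

lemma ascending_permutes_eq_id:
  assumes x: "x permutes {1..n}" and asc: "\<And>j. 1 \<le> j \<Longrightarrow> j < n \<Longrightarrow> x j < x (Suc j)"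
  shows "x = id"
proof -
  have gap: "x p + (q - p) \<le> x q" if "1 \<le> p" "p \<le> q" "q \<le> n" for p q
    using that
  proof (induction q)
    case (Suc q)
    then show ?case using asc[of q] by (cases "p = Suc q") auto
  qed simp
  have "x k = k" if k: "k \<in> {1..n}" for k
    using gap[of 1 k] gap[of k n] k permutes_in_image[OF x, of 1] permutes_in_image[OF x, of n]
    by auto
  then show ?thesis
    using permutes_not_in[OF x] by (auto simp: fun_eq_iff)
qed

lemma exists_word_inversion_number:
  assumes "x permutes {1..n}"
  shows "\<exists>ws. is_word n ws x \<and> length ws = inversion_number n x"
  using assms
proof (induction "inversion_number n x" arbitrary: x rule: less_induct)
  case less
  show ?case
  proof (cases "x = id")
    case True
    then show ?thesis by (auto simp: is_word_def)
  next
    case False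
    then obtain j where j: "1 \<le> j" "j < n" "x (Suc j) < x j"
      using ascending_permutes_eq_id[OF less.prems] permutes_apply_neq[OF less.prems]
      by (metis lessI less_irrefl linorder_neqE_nat)
    then have jS: "j \<in> Sgens n" by (simp add: Sgens_def)
    have dec: "Suc (inversion_number n (x \<circ> sgen j)) = inversion_number n x"
      by (rule inversion_number_comp_sgen_descent[OF j])
    obtain ws where ws: "is_word n ws (x \<circ> sgen j)" "length ws = inversion_number n (x \<circ> sgen j)"
      using less.hyps[of "x \<circ> sgen j"] dec permutes_compose[OF sgen_permutes[OF jS] less.prems]
      by auto
    have "is_word n (ws @ [j]) x"
      using ws(1) jS by (auto simp: is_word_def word_eval_snoc o_assoc[symmetric])
    then show ?thesis using ws(2) dec by (intro exI[of _ "ws @ [j]"]) simp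
  qed
qed

lemma len_eq_inversion_number:
  assumes x: "x permutes {1..n}"
  shows "len n x = inversion_number n x"
proof -
  obtain ws where ws: "is_word n ws x" "length ws = inversion_number n x"
    using exists_word_inversion_number[OF x] by blast
  then have "len n x \<le> inversion_number n x"
    unfolding len_def by (intro Least_le) blast
  moreover obtain vs where "is_word n vs x" "length vs = len n x"
    using ws LeastI[of "\<lambda>k. \<exists>ws. is_word n ws x \<and> length ws = k"] unfolding len_def by blast
  then have "inversion_number n x \<le> len n x"
    using inversion_number_word_le[of vs n] by (auto simp: is_word_def)
  ultimately show ?thesis by simp
qed

lemma len_inv:
  assumes x: "x permutes {1..n}"
  shows "len n (inv x) = len n x"
  using inversion_number_inv[OF x] len_eq_inversion_number[OF x]
    len_eq_inversion_number[OF permutes_inv[OF x]] by simp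

lemma exists_reduced_word: "x permutes {1..n} \<Longrightarrow> \<exists>ws. reduced_word n ws x"
  using exists_word_inversion_number len_eq_inversion_number by (metis reduced_word_def)

lemma DR_iff:
  assumes x: "x permutes {1..n}" and j: "j \<in> Sgens n"
  shows "j \<in> DR n x \<longleftrightarrow> x (Suc j) < x j"
proof -
  have j': "1 \<le> j" "j < n" using j by (simp_all add: Sgens_def)
  have len_comp: "len n (x \<circ> sgen j) = inversion_number n (x \<circ> sgen j)"
    by (rule len_eq_inversion_number[OF permutes_compose[OF sgen_permutes[OF j] x]])
  consider "x j < x (Suc j)" | "x (Suc j) < x j"
    using permutes_apply_neq[OF x, of j "Suc j"] by linarith
  then show ?thesis
  proof cases
    case 1
    then show ?thesis
      using inversion_number_comp_sgen_ascent[OF j' 1] j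
      by (simp add: DR_def len_comp len_eq_inversion_number[OF x])
  next
    case 2
    then show ?thesis
      using inversion_number_comp_sgen_descent[OF j' 2] j
      by (auto simp: DR_def len_comp len_eq_inversion_number[OF x])
  qed
qed

lemma DL_eq_DR_inv:
  assumes x: "x permutes {1..n}"
  shows "DL n x = DR n (inv x)"
proof -
  have "len n (sgen j \<circ> x) = len n (inv x \<circ> sgen j)" if "j \<in> Sgens n" for j
  proof -
    have sx: "sgen j \<circ> x permutes {1..n}" by (rule permutes_compose[OF x sgen_permutes[OF that]])
    have "inv (sgen j \<circ> x) = inv x \<circ> sgen j"
      using o_inv_distrib[OF permutes_bij[OF sgen_permutes[OF that]] permutes_bij[OF x]] by simp
    then show ?thesis using len_inv[OF sx] by simp
  qed
  then show ?thesis
    by (auto simp: DL_def DR_def len_inv[OF x])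
qed

lemma DL_iff:
  assumes x: "x permutes {1..n}" and j: "j \<in> Sgens n"
  shows "j \<in> DL n x \<longleftrightarrow> inv x (Suc j) < inv x j"
  using DR_iff[OF permutes_inv[OF x] j] by (simp add: DL_eq_DR_inv[OF x])

lemma DL_inv_comp_iff:
  assumes u: "u permutes {1..n}" and w: "w permutes {1..n}" and j: "j \<in> Sgens n"
  shows "j \<in> DL n (inv u \<circ> w) \<longleftrightarrow> inv w (u (Suc j)) < inv w (u j)"
proof -
  have "inv (inv u \<circ> w) = inv w \<circ> u"
    using o_inv_distrib[OF permutes_bij[OF permutes_inv[OF u]] permutes_bij[OF w]]
    by (simp add: permutes_inv_inv[OF u])
  then show ?thesis
    using DL_iff[OF permutes_compose[OF w permutes_inv[OF u]] j] by simp
qed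

section \<open>Support and stable initial segments\<close>

lemma supp_subset_Sgens: "supp n x \<subseteq> Sgens n"
  by (auto simp: supp_def reduced_word_def is_word_def)

lemma image_atLeastAtMost_word_eval:
  "set ws \<subseteq> Sgens n \<Longrightarrow> j \<notin> set ws \<Longrightarrow> word_eval ws ` {1..j} = {1..j}"
proof (induction ws)
  case (Cons a ws)
  then have "1 \<le> a" "a \<noteq> j" "word_eval ws ` {1..j} = {1..j}" by (auto simp: Sgens_def)
  then show ?case
    unfolding word_eval_Cons image_comp[symmetric] using image_atLeastAtMost_sgen[of a j] by simp
qed simp

lemma sum_atLeastAtMost_comp_sgen_other:
  assumes "1 \<le> a" "a \<noteq> j"
  shows "(\<Sum>p=1..j. y (sgen a p)) = (\<Sum>p=1..j. y p)"
  using image_atLeastAtMost_sgen[OF assms]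
  by (intro sum.reindex_bij_betw) (simp add: bij_betw_def sgen_def)

lemma sum_atLeastAtMost_comp_sgen_same:
  assumes "1 \<le> j"
  shows "(\<Sum>p=1..j. y (sgen j p)) + y j = (\<Sum>p=1..j. y p) + y (Suc j)"
proof -
  have "(\<Sum>p=1..<j. y (sgen j p)) = (\<Sum>p=1..<j. y p)"
    by (rule sum.cong) (auto simp: sgen_def)
  moreover have "{1..j} = insert j {1..<j}" using assms by auto
  ultimately show ?thesis by (simp add: sgen_def add_ac)
qed

lemma reduced_word_snoc:
  assumes ws: "set (ws @ [a]) \<subseteq> Sgens n"
    and red: "inversion_number n (word_eval (ws @ [a])) = length (ws @ [a])"
  shows "inversion_number n (word_eval ws) = length ws"
    and "word_eval ws a < word_eval ws (Suc a)"
proof -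
  let ?y = "word_eval ws"
  have y: "?y permutes {1..n}" and a: "a \<in> Sgens n"
    using ws word_eval_permutes by auto
  have last: "inversion_number n (?y \<circ> sgen a) = Suc (length ws)"
    using red unfolding word_eval_snoc by simp
  have "inversion_number n ?y \<le> length ws"
    using inversion_number_word_le ws by auto
  moreover have "inversion_number n (?y \<circ> sgen a) \<le> Suc (inversion_number n ?y)"
    by (rule inversion_number_comp_sgen_le[OF y a])
  ultimately show reduced: "inversion_number n ?y = length ws"
    using last by linarith
  show "?y a < ?y (Suc a)"
  proof (rule ccontr)
    assume "\<not> ?y a < ?y (Suc a)"
    then have "?y (Suc a) < ?y a"
      using permutes_apply_neq[OF y, of a "Suc a"] by linarith
    then have "Suc (inversion_number n (?y \<circ> sgen a)) = inversion_number n ?y"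
      using a by (intro inversion_number_comp_sgen_descent) (simp_all add: Sgens_def)
    then show False using last reduced by simp
  qed
qed

text \<open>Along a reduced word every letter is an ascent, so the sum of the first \<open>j\<close> values
  never decreases and strictly increases at each occurrence of \<open>s\<^sub>j\<close>.\<close>

lemma reduced_word_sum_atLeastAtMost:
  assumes "set ws \<subseteq> Sgens n" "inversion_number n (word_eval ws) = length ws" "1 \<le> j"
  shows "(\<Sum>p=1..j. p) + of_bool (j \<in> set ws) \<le> (\<Sum>p=1..j. word_eval ws p)"
  using assms
proof (induction ws rule: rev_induct)
  case (snoc a ws)
  let ?y = "word_eval ws"
  have a: "1 \<le> a" and ws: "set ws \<subseteq> Sgens n"
    using snoc.prems(1) by (auto simp: Sgens_def)
  have IH: "(\<Sum>p=1..j. p) + of_bool (j \<in> set ws) \<le> (\<Sum>p=1..j. ?y p)"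
    using snoc.IH[OF ws reduced_word_snoc(1)[OF snoc.prems(1,2)] snoc.prems(3)] .
  have eval: "word_eval (ws @ [a]) p = ?y (sgen a p)" for p
    by (simp add: word_eval_snoc)
  show ?case
  proof (cases "a = j")
    case True
    have "(\<Sum>p=1..j. ?y (sgen j p)) + ?y j = (\<Sum>p=1..j. ?y p) + ?y (Suc j)"
      by (rule sum_atLeastAtMost_comp_sgen_same[OF snoc.prems(3)])
    moreover have "?y j < ?y (Suc j)"
      using reduced_word_snoc(2)[OF snoc.prems(1,2)] True by simp
    ultimately show ?thesis
      using IH True unfolding eval by simp
  next
    case False
    then show ?thesis
      using IH sum_atLeastAtMost_comp_sgen_other[OF a False, of ?y] unfolding eval by simp
  qed
qed simp

lemma supp_iff_image_atLeastAtMost: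
  assumes x: "x permutes {1..n}" and j: "j \<in> Sgens n"
  shows "j \<in> supp n x \<longleftrightarrow> x ` {1..j} \<noteq> {1..j}"
proof
  assume "j \<in> supp n x"
  then obtain ws where ws: "reduced_word n ws x" "j \<in> set ws"
    by (auto simp: supp_def)
  then have "(\<Sum>p=1..j. p) < (\<Sum>p=1..j. x p)"
    using reduced_word_sum_atLeastAtMost[of ws n j] len_eq_inversion_number[OF x] j
    by (auto simp: reduced_word_def is_word_def Sgens_def)
  moreover have "(\<Sum>p\<in>x ` {1..j}. p) = (\<Sum>p=1..j. x p)"
    using sum.reindex[OF permutes_inj_on[OF x], of id "{1..j}"] by simp
  ultimately show "x ` {1..j} \<noteq> {1..j}" by auto
next
  assume unstable: "x ` {1..j} \<noteq> {1..j}"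
  obtain ws where ws: "reduced_word n ws x"
    using exists_reduced_word[OF x] by blast
  then have "j \<in> set ws"
    using image_atLeastAtMost_word_eval[of ws n j] unstable
    by (auto simp: reduced_word_def is_word_def)
  then show "j \<in> supp n x"
    using ws by (auto simp: supp_def)
qed

lemma supp_disjoint_if_split:
  assumes x: "x permutes {1..n}" and y: "y permutes {1..n}"
    and x_stable: "\<And>j. i < j \<Longrightarrow> j < n \<Longrightarrow> x ` {1..j} = {1..j}"
    and y_fixes: "\<And>k. k \<le> i \<Longrightarrow> y k = k"
  shows "supp n x \<inter> supp n y = {}"
proof -
  have "j \<notin> supp n x" if y_supp: "j \<in> supp n y" for j
  proof -
    have j: "j \<in> Sgens n" using y_supp supp_subset_Sgens by blast
    have "\<not> j \<le> i"
    proof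
      assume "j \<le> i"
      then have "y ` {1..j} = id ` {1..j}" by (intro image_cong) (simp_all add: y_fixes)
      then show False using y_supp supp_iff_image_atLeastAtMost[OF y j] by simp
    qed
    then show ?thesis
      using x_stable[of j] supp_iff_image_atLeastAtMost[OF x j] j by (simp add: Sgens_def)
  qed
  then show ?thesis by blast
qed

section \<open>Minimal coset representatives\<close>

lemma parabolic_permutes:
  assumes "J \<subseteq> Sgens n" "v \<in> parabolic J"
  shows "v permutes {1..n}"
proof -
  obtain ws where "set ws \<subseteq> J" "v = word_eval ws"
    using assms(2) by (auto simp: parabolic_def)
  then show ?thesis using word_eval_permutes[of ws n] assms(1) by auto
qed

lemma parabolic_fixes_below:
  assumes "v \<in> parabolic J" "J \<subseteq> {i..}" "k < i"
  shows "v k = k"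
proof -
  have "word_eval ws k = k" if "set ws \<subseteq> {i..}" for ws
    using that assms(3) by (induction ws) (auto simp: sgen_def)
  then show ?thesis
    using assms(1,2) by (auto simp: parabolic_def)
qed

lemma min_coset_rep_right_descents:
  assumes "min_coset_rep n J x u"
  shows "DR n u \<inter> J = {}"
proof -
  obtain ws where ws: "set ws \<subseteq> J" "u = x \<circ> word_eval ws"
    using assms by (auto simp: min_coset_rep_def parabolic_def)
  have no_descent: "len n u \<le> len n (u \<circ> sgen j)" if "j \<in> J" for j
  proof -
    have "word_eval (ws @ [j]) \<in> parabolic J"
      using ws(1) that by (auto simp: parabolic_def intro!: exI[of _ "ws @ [j]"])
    then have "len n u \<le> len n (x \<circ> word_eval (ws @ [j]))"
      using assms by (auto simp: min_coset_rep_def)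
    then show ?thesis by (simp add: ws(2) word_eval_snoc o_assoc)
  qed
  then show ?thesis
    unfolding DR_def by (auto dest: no_descent)
qed

section \<open>Right-almost-reducible permutations\<close>

lemma unstable_segment_image_atLeastLessThan:
  assumes inj: "inj_on u {1..Suc i}" and i: "1 \<le> i"
    and stable: "u ` {1..Suc i} = {1..Suc i}" and unstable: "u ` {1..i} \<noteq> {1..i}"
  shows "1 \<le> u i" and "u (Suc i) \<le> i" and "u ` {1..<i} = {1..Suc i} - {u i, u (Suc i)}"
proof -
  have image_diff: "u ` ({1..Suc i} - B) = {1..Suc i} - u ` B" if "B \<subseteq> {1..Suc i}" for B
    using inj_on_image_set_diff[OF inj _ that] stable by simp
  have "u i \<in> {1..Suc i}" "u (Suc i) \<in> {1..Suc i}"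
    using stable i by auto
  then show "1 \<le> u i" by simp
  show "u (Suc i) \<le> i"
  proof (rule ccontr)
    assume "\<not> u (Suc i) \<le> i"
    then have "u (Suc i) = Suc i" using \<open>u (Suc i) \<in> {1..Suc i}\<close> by simp
    moreover have "{1..i} = {1..Suc i} - {Suc i}" by auto
    ultimately show False using image_diff[of "{Suc i}"] unstable by simp
  qed
  have "{1..<i} = {1..Suc i} - {i, Suc i}" by auto
  then show "u ` {1..<i} = {1..Suc i} - {u i, u (Suc i)}"
    using image_diff[of "{i, Suc i}"] i by simp
qed

lemma right_almost_reducible_coset_rep:
  assumes "right_almost_reducible n w i"
  obtains u where "u permutes {1..n}" "1 \<le> i" "i < n"
    and "\<And>k. k < i \<Longrightarrow> u k = w k"
    and "u i < u (Suc i)"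
    and "u ` {1..i} \<noteq> {1..i}"
    and "\<And>j. i < j \<Longrightarrow> j \<le> n \<Longrightarrow> u ` {1..j} = {1..j}"
    and "inv w (u (Suc i)) < inv w (u i)"
proof -
  let ?J = "{i..<n}"
  obtain u where bp: "BP_decomp n ?J w u" and supp_u: "supp n u \<inter> ?J = {i}"
    using assms by (auto simp: right_almost_reducible_def almost_reducible_def)
  have w: "w permutes {1..n}"
    using assms by (simp add: right_almost_reducible_def almost_reducible_def
        bruhat_irreducible_def perm_Sn_def)
  have iS: "i \<in> Sgens n" using supp_u supp_subset_Sgens by blast
  then have i: "1 \<le> i" "i < n" by (simp_all add: Sgens_def)
  have mcr: "min_coset_rep n ?J w u" and DL_i: "i \<in> DL n (inv u \<circ> w)"
    using bp supp_u by (auto simp: BP_decomp_def)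
  obtain v where v: "v \<in> parabolic ?J" "u = w \<circ> v"
    using mcr by (auto simp: min_coset_rep_def)
  have "v permutes {1..n}"
    using parabolic_permutes[OF _ v(1)] i by (auto simp: Sgens_def)
  then have u: "u permutes {1..n}"
    using permutes_compose[OF _ w] v(2) by simp
  have below: "u k = w k" if "k < i" for k
  proof -
    have "v k = k" by (rule parabolic_fixes_below[OF v(1) _ that]) auto
    then show ?thesis using v(2) by simp
  qed
  have "i \<notin> DR n u"
    using min_coset_rep_right_descents[OF mcr] i by auto
  then have asc: "u i < u (Suc i)"
    using DR_iff[OF u iS] permutes_apply_neq[OF u, of i "Suc i"] by simp
  have unstable: "u ` {1..i} \<noteq> {1..i}"
    using supp_iff_image_atLeastAtMost[OF u iS] supp_u by auto
  have stable: "u ` {1..j} = {1..j}" if "i < j" "j \<le> n" for j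
  proof (cases "j = n")
    case True
    then show ?thesis using permutes_image[OF u] by simp
  next
    case False
    then show ?thesis
      using supp_iff_image_atLeastAtMost[OF u, of j] supp_u that by (auto simp: Sgens_def)
  qed
  have order: "inv w (u (Suc i)) < inv w (u i)"
    using DL_i DL_inv_comp_iff[OF u w iS] by simp
  show ?thesis
    by (rule that[OF u i below asc unstable stable order])
qed

lemma not_bruhat_irreducible_comp_sgen_factor:
  assumes w: "w permutes {1..n}" and u: "u permutes {1..n}" and i: "i \<in> Sgens n"
    and below: "\<And>k. k < i \<Longrightarrow> u k = w k" and at_i: "w i = u (Suc i)"
    and stable: "\<And>j. i < j \<Longrightarrow> j < n \<Longrightarrow> u ` {1..j} = {1..j}"
    and asc: "u i < u (Suc i)" and bound: "u (Suc i) \<le> i"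
    and not_DR: "i \<notin> DR n w"
  shows "\<not> bruhat_irreducible n w"
proof
  assume irr: "bruhat_irreducible n w"
  define x where "x = u \<circ> sgen i"
  define y where "y = inv x \<circ> w"
  have x: "x permutes {1..n}"
    unfolding x_def by (rule permutes_compose[OF sgen_permutes[OF i] u])
  have y: "y permutes {1..n}"
    unfolding y_def by (rule permutes_compose[OF w permutes_inv[OF x]])
  have w_eq: "w = x \<circ> y"
    unfolding y_def using permutes_inv_o[OF x] by (simp add: o_assoc)
  have "x (Suc i) \<noteq> Suc i"
    using asc bound by (simp add: x_def sgen_def)
  then have x_ne: "x \<noteq> id" by auto
  have y_ne: "y \<noteq> id"
  proof
    assume "y = id"
    then have "w (Suc i) < w i"
      using w_eq asc by (simp add: x_def sgen_def)
    then show False using DR_iff[OF w i] not_DR by simp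
  qed
  have x_w: "x k = w k" if "k \<le> i" for k
    using that below[of k] at_i by (cases "k = i") (auto simp: x_def sgen_def)
  have y_fixes: "y k = k" if "k \<le> i" for k
    unfolding y_def using x_w[OF that, symmetric] permutes_inverses(2)[OF x, of k] by simp
  have x_stable: "x ` {1..j} = {1..j}" if "i < j" "j < n" for j
    unfolding x_def image_comp[symmetric]
    using image_atLeastAtMost_sgen[of i j] stable[OF that] i that by (simp add: Sgens_def)
  have "supp n x \<inter> supp n y = {}"
    by (rule supp_disjoint_if_split[OF x y x_stable y_fixes])
  then show False
    using irr w_eq x y x_ne y_ne unfolding bruhat_irreducible_def perm_Sn_def by blast
qed

lemma right_almost_reducible_missing_pair:
  assumes "right_almost_reducible n w i"
  obtains a b where "1 \<le> a" "a < b" "b \<le> i"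
    and "w ` {1..<i} = {1..Suc i} - {a, b}"
    and "inv w b < inv w a"
    and "w i \<notin> {a, b}"
proof -
  obtain u where u: "u permutes {1..n}" and i: "1 \<le> i" "i < n"
    and below: "\<And>k. k < i \<Longrightarrow> u k = w k" and asc: "u i < u (Suc i)"
    and unstable: "u ` {1..i} \<noteq> {1..i}"
    and stable: "\<And>j. i < j \<Longrightarrow> j \<le> n \<Longrightarrow> u ` {1..j} = {1..j}"
    and order: "inv w (u (Suc i)) < inv w (u i)"
    using right_almost_reducible_coset_rep[OF assms] by blast
  have w: "w permutes {1..n}" and irr: "bruhat_irreducible n w" and not_DR: "i \<notin> DR n w"
    using assms by (auto simp: right_almost_reducible_def almost_reducible_def
        bruhat_irreducible_def perm_Sn_def)
  have a: "1 \<le> u i" and b: "u (Suc i) \<le> i" and u_image: "u ` {1..<i} = {1..Suc i} - {u i, u (Suc i)}"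
    using unstable_segment_image_atLeastLessThan[OF permutes_inj_on[OF u] i(1) stable unstable] i
    by auto
  have w_image: "w ` {1..<i} = {1..Suc i} - {u i, u (Suc i)}"
    using u_image below by (auto intro: image_cong)
  have "w i \<noteq> u i"
  proof
    assume "w i = u i"
    then have "inv w (u (Suc i)) < i"
      using order permutes_inverses(2)[OF w] by metis
    moreover have "inv w (u (Suc i)) \<in> {1..n}"
      using a asc b i permutes_in_image[OF permutes_inv[OF w]] by simp
    ultimately have "w (inv w (u (Suc i))) \<in> w ` {1..<i}" by simp
    then show False using w_image permutes_inverses(1)[OF w] by simp
  qed
  moreover have "w i \<noteq> u (Suc i)"
    using not_bruhat_irreducible_comp_sgen_factor[OF w u _ below _ _ asc b not_DR] stable i irr
    by (auto simp: Sgens_def)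
  ultimately show ?thesis
    using that[OF a asc b w_image order] by blast
qed

theorem proposition5p4:
  fixes n i :: nat and w :: "nat \<Rightarrow> nat"
  assumes "right_almost_reducible n w i"
  shows "Max (w ` {1..<i}) = i + 1 \<and> w i > i + 1 \<and>
    (\<forall>a b. a \<in> {1..i+1} - w ` {1..<i} \<and> b \<in> {1..i+1} - w ` {1..<i} \<and> a < b
               \<longrightarrow> inv w b < inv w a)"
proof -
  obtain a b where ab: "1 \<le> a" "a < b" "b \<le> i"
    and image: "w ` {1..<i} = {1..Suc i} - {a, b}"
    and order: "inv w b < inv w a" and w_i: "w i \<notin> {a, b}"
    using right_almost_reducible_missing_pair[OF assms] by blast
  have w: "w permutes {1..n}" and i: "i \<in> Sgens n"
    using assms supp_subset_Sgens
    by (auto simp: right_almost_reducible_def almost_reducible_def bruhat_irreducible_def perm_Sn_def)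
  have missing: "{1..i+1} - w ` {1..<i} = {a, b}"
    using image ab by auto
  have "Max (w ` {1..<i}) = i + 1"
    unfolding image using ab by (intro Max_eqI) auto
  moreover have "w i > i + 1"
  proof -
    have "w i \<notin> w ` {1..<i}"
      using permutes_inj[OF w] by (auto simp: inj_eq)
    then have "w i \<notin> {1..i+1}"
      using w_i missing by blast
    moreover have "1 \<le> w i"
      using permutes_in_image[OF w, of i] i by (simp add: Sgens_def)
    ultimately show ?thesis by simp
  qed
  moreover have "\<forall>a' b'. a' \<in> {a, b} \<and> b' \<in> {a, b} \<and> a' < b' \<longrightarrow> inv w b' < inv w a'"
    using ab order by auto
  ultimately show ?thesis
    unfolding missing by blast
qed

end
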